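(* Assume the setting of the context (in particular $\rho\ge0$, $r+\frac\rho2\ge1$, $p>1$, $c^2<c_1^2$). Then every $\Phi_c\in\mathcal{G}_c$ is a minimizer of $U\mapsto\mathcal{E}(U)+c\,\mathcal{M}(U)$ over $U=(u,w)\in X$ subject to the constraint $\mathcal{Q}(u)=2^{\frac{p+1}{p-1}}[m_1(c)]^{\frac{p+1}{p-1}}$.
   Context: $L$ and $B$ are Fourier multiplier operators on $\mathbb{R}$, $\widehat{Lu}=l\widehat u$, $\widehat{Bu}=b\widehat u$, with smooth real symbols of orders $\rho\ge0$ and $-r$, $r\ge0$, $r+\frac\rho2\ge1$; for all $k$, $\frac{d^k}{d\xi^k}l=O(|\xi|^{\rho-k})$, $\frac{d^k}{d\xi^k}b=O(|\xi|^{-r-k})$ as $|\xi|\to\infty$; and with best constants $c_i>0$, $c_1^2(1+\xi^2)^{\rho/2}\le l(\xi)\le c_2^2(1+\xi^2)^{\rho/2}$, $c_3^2(1+\xi^2)^{-r/2}\le b(\xi)\le c_4^2(1+\xi^2)^{-r/2}$. $L^{1/2}B^{-1/2}$, $B^{-1/2}$ have symbols $l^{1/2}b^{-1/2}$, $b^{-1/2}$. Let $s_0=\frac{r+\rho}2$, $X=H^{s_0}\times H^{s_0-\rho/2}$ (Sobolev spaces on $\mathbb{R}$), $p>1$. For $\psi\in H^{s_0}$: $\mathcal{I}_c(\psi)=\frac12\|L^{1/2}B^{-1/2}\psi\|_{L^2}^2-\frac{c^2}2\|B^{-1/2}\psi\|_{L^2}^2$, $\mathcal{Q}(\psi)=\int|\psi|^{p+1}dx$,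 and $m_1(c)=\inf\{\mathcal{I}_c(\psi):\psi\in H^{s_0},\mathcal{Q}(\psi)=1\}$. For $U=(u,w)\in X$: $\mathcal{E}(U)=\frac12\|B^{-1/2}w\|_{L^2}^2+\frac12\|L^{1/2}B^{-1/2}u\|_{L^2}^2-\frac1{p+1}\|u\|_{L^{p+1}}^{p+1}$ and $\mathcal{M}(U)=\int(B^{-1/2}u)(B^{-1/2}w)dx$. Let $G_c=\{[2m_1(c)]^{1/(p-1)}\psi:\ \psi\in H^{s_0},\ \mathcal{Q}(\psi)=1,\ \mathcal{I}_c(\psi)=m_1(c)\}$ (the traveling wave profiles of speed $c$ for $u_{tt}-Lu_{xx}=-B(|u|^{p-1}u)_{xx}$), and $\mathcal{G}_c=\{(\phi,-c\phi):\phi\in G_c\}\subset X$. *)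

theory Defs
  imports "HOL-Analysis.Analysis"
begin

definition ft_trunc :: "(real \<Rightarrow> real) \<Rightarrow> real \<Rightarrow> real \<Rightarrow> complex" where
  "ft_trunc u n \<xi> =
     (LINT x:{-n..n}|lborel. complex_of_real (u x) * cis (- (x * \<xi>)))
       / complex_of_real (sqrt (2 * pi))"

definition is_fourier_L2 :: "(real \<Rightarrow> real) \<Rightarrow> (real \<Rightarrow> complex) \<Rightarrow> bool" where
  "is_fourier_L2 u v \<longleftrightarrow>
     v \<in> borel_measurable lborel \<and>
     integrable lborel (\<lambda>\<xi>. (cmod (v \<xi>))\<^sup>2) \<and>
     ((\<lambda>n::nat. \<integral>\<^sup>+ \<xi>. ennreal ((cmod (v \<xi> - ft_trunc u (real n) \<xi>))\<^sup>2) \<partial>lborel)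
        \<longlonglongrightarrow> 0)"

definition fourier_L2 :: "(real \<Rightarrow> real) \<Rightarrow> real \<Rightarrow> complex" where
  "fourier_L2 u = (SOME v. is_fourier_L2 u v)"

definition sobolev :: "real \<Rightarrow> (real \<Rightarrow> real) set" where
  "sobolev s = {u. u \<in> borel_measurable lborel \<and>
                   integrable lborel (\<lambda>x. (u x)\<^sup>2) \<and>
                   integrable lborel (\<lambda>\<xi>. (1 + \<xi>\<^sup>2) powr s * (cmod (fourier_L2 u \<xi>))\<^sup>2)}"

definition smooth_fun :: "(real \<Rightarrow> real) \<Rightarrow> bool" where
  "smooth_fun f \<longleftrightarrow> (\<forall>k::nat. \<forall>\<xi>. ((deriv ^^ k) f) differentiable (at \<xi>))"

definition symbol_order :: "(real \<Rightarrow> real) \<Rightarrow> real \<Rightarrow> bool" where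
  "symbol_order f m \<longleftrightarrow>
     (\<forall>k::nat. \<exists>C R. \<forall>\<xi>. R \<le> \<bar>\<xi>\<bar> \<longrightarrow> \<bar>(deriv ^^ k) f \<xi>\<bar> \<le> C * \<bar>\<xi>\<bar> powr (m - real k))"

definition best_lower :: "(real \<Rightarrow> real) \<Rightarrow> real \<Rightarrow> real" where
  "best_lower f a = Inf (range (\<lambda>\<xi>. f \<xi> / (1 + \<xi>\<^sup>2) powr (a / 2)))"

text \<open>||L^{1/2} B^{-1/2} psi||^2 and ||B^{-1/2} psi||^2 via Plancherel.\<close>
definition LB_norm2 :: "(real \<Rightarrow> real) \<Rightarrow> (real \<Rightarrow> real) \<Rightarrow> (real \<Rightarrow> real) \<Rightarrow> real" where
  "LB_norm2 l b \<psi> = (LINT \<xi>|lborel. l \<xi> / b \<xi> * (cmod (fourier_L2 \<psi> \<xi>))\<^sup>2)"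

definition B_norm2 :: "(real \<Rightarrow> real) \<Rightarrow> (real \<Rightarrow> real) \<Rightarrow> real" where
  "B_norm2 b \<psi> = (LINT \<xi>|lborel. (cmod (fourier_L2 \<psi> \<xi>))\<^sup>2 / b \<xi>)"

definition Ic :: "(real \<Rightarrow> real) \<Rightarrow> (real \<Rightarrow> real) \<Rightarrow> real \<Rightarrow> (real \<Rightarrow> real) \<Rightarrow> real" where
  "Ic l b c \<psi> = LB_norm2 l b \<psi> / 2 - c\<^sup>2 / 2 * B_norm2 b \<psi>"

definition Qf :: "real \<Rightarrow> (real \<Rightarrow> real) \<Rightarrow> real" where
  "Qf p \<psi> = (LINT x|lborel. \<bar>\<psi> x\<bar> powr (p + 1))"

definition m1 :: "(real \<Rightarrow> real) \<Rightarrow> (real \<Rightarrow> real) \<Rightarrow> real \<Rightarrow> real \<Rightarrow> real \<Rightarrow> real \<Rightarrow> real" where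
  "m1 l b r \<rho> p c = Inf {Ic l b c \<psi> | \<psi>. \<psi> \<in> sobolev ((r + \<rho>) / 2) \<and> Qf p \<psi> = 1}"

definition Xspace :: "real \<Rightarrow> real \<Rightarrow> ((real \<Rightarrow> real) \<times> (real \<Rightarrow> real)) set" where
  "Xspace r \<rho> = sobolev ((r + \<rho>) / 2) \<times> sobolev ((r + \<rho>) / 2 - \<rho> / 2)"

definition Ef :: "(real \<Rightarrow> real) \<Rightarrow> (real \<Rightarrow> real) \<Rightarrow> real \<Rightarrow>
                  (real \<Rightarrow> real) \<times> (real \<Rightarrow> real) \<Rightarrow> real" where
  "Ef l b p U = B_norm2 b (snd U) / 2 + LB_norm2 l b (fst U) / 2
                 - Qf p (fst U) / (p + 1)"

text \<open>M(U) = integral of (B^{-1/2}u)(B^{-1/2}w), via Parseval.\<close>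
definition Mf :: "(real \<Rightarrow> real) \<Rightarrow> (real \<Rightarrow> real) \<times> (real \<Rightarrow> real) \<Rightarrow> real" where
  "Mf b U = (LINT \<xi>|lborel.
      Re (fourier_L2 (fst U) \<xi> * cnj (fourier_L2 (snd U) \<xi>)) / b \<xi>)"

definition Gc :: "(real \<Rightarrow> real) \<Rightarrow> (real \<Rightarrow> real) \<Rightarrow> real \<Rightarrow> real \<Rightarrow> real \<Rightarrow> real \<Rightarrow>
                  (real \<Rightarrow> real) set" where
  "Gc l b r \<rho> p c = {(\<lambda>x. (2 * m1 l b r \<rho> p c) powr (1 / (p - 1)) * \<psi> x) | \<psi>.
       \<psi> \<in> sobolev ((r + \<rho>) / 2) \<and> Qf p \<psi> = 1 \<and> Ic l b c \<psi> = m1 l b r \<rho> p c}"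

definition GGc :: "(real \<Rightarrow> real) \<Rightarrow> (real \<Rightarrow> real) \<Rightarrow> real \<Rightarrow> real \<Rightarrow> real \<Rightarrow> real \<Rightarrow>
                  ((real \<Rightarrow> real) \<times> (real \<Rightarrow> real)) set" where
  "GGc l b r \<rho> p c = {(\<phi>, \<lambda>x. - c * \<phi> x) | \<phi>. \<phi> \<in> Gc l b r \<rho> p c}"

end

theory Submission
  imports Defs
begin

text \<open>With \<open>\<hat>u\<close>, \<open>\<hat>w\<close> the Plancherel transforms,
  \<open>\<E>(u, w) + c \<M>(u, w) = \<I>\<^sub>c(u) - \<Q>(u)/(p+1) + \<integral> |\<hat>w + c \<hat>u|\<^sup>2 / (2b)\<close>,
  so the functional is bounded below by \<open>\<I>\<^sub>c(u) - \<Q>(u)/(p+1)\<close>, with equality on the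
  traveling-wave ansatz \<open>w = -c u\<close>. On the constraint \<open>\<Q>(u) = K\<^bsup>p+1\<^esup>\<close> the
  homogeneity of \<open>\<I>\<^sub>c\<close> and \<open>\<Q>\<close> gives \<open>\<I>\<^sub>c(u) \<ge> K\<^sup>2 m\<^sub>1(c)\<close>, and the elements of
  \<open>\<G>\<^sub>c\<close> attain both bounds.

  Because \<open>fourier_L2\<close> is defined by choice, the scaling rule
  \<open>fourier_L2 (t u) = t fourier_L2 u\<close> behind the homogeneity holds (almost everywhere) only once
  the Plancherel transform is known to exist. It is constructed as the \<open>L\<^sup>2\<close>-limit
  of the transforms of truncations, which are Cauchy by Bessel's inequality for Fourier series on
  bounded intervals.\<close>

section \<open>Fourier series on a bounded interval\<close>

lemma borel_measurable_cis [measurable]: "cis \<in> borel_measurable borel"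
  by (intro borel_measurable_continuous_onI continuous_intros)

lemma borel_measurable_cnj [measurable (raw)]:
  "f \<in> borel_measurable M \<Longrightarrow> (\<lambda>x. cnj (f x)) \<in> borel_measurable M"
  by (rule measurable_compose[OF _ borel_measurable_continuous_onI])
     (auto intro: continuous_on_cnj continuous_on_id)

lemma has_vector_derivative_cis_primitive:
  fixes t :: real
  assumes "t \<noteq> 0"
  shows "((\<lambda>x. - \<i> * cis (t * x) / of_real t) has_vector_derivative cis (t * x)) (at x within S)"
proof -
  have "((\<lambda>x. (- \<i> / of_real t) * cis (t * x)) has_vector_derivative
          (- \<i> / of_real t) * (of_real t * (\<i> * cis (t * x)))) (at x within S)"
    by (rule has_vector_derivative_mult_right)
       (auto simp: has_vector_derivative_def algebra_simps scaleR_conv_of_real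
             intro!: derivative_eq_intros)
  then show ?thesis
    using assms by (simp add: field_simps)
qed

lemma integral_cis_symmetric_interval:
  fixes a :: real and m :: int
  assumes a: "a > 0"
  shows "(LINT x|lborel. indicator {-a..a} x *\<^sub>R cis (pi / a * m * x)) =
           (if m = 0 then of_real (2 * a) else 0)"
proof (cases "m = 0")
  case True
  have "(LINT x|lborel. indicator {-a..a} x *\<^sub>R (1::complex)) = of_real (measure lborel {-a..a})"
    by (simp add: integral_indicator scaleR_conv_of_real)
  then show ?thesis
    using True a by (simp add: scaleR_conv_of_real)
next
  case False
  define t where "t = pi / a * m"
  have t: "t \<noteq> 0"
    using False a by (simp add: t_def)
  have "(LBINT x=-a..a. cis (t * x)) = - \<i> * cis (t * a) / of_real t - - \<i> * cis (t * (-a)) / of_real t"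
    by (rule interval_integral_FTC_finite, intro continuous_intros,
        rule has_vector_derivative_cis_primitive[OF t])
  also have "cis (t * a) = cis (t * (-a))"
    using a by (simp add: t_def cis.ctr complex_eq_iff)
  finally have "(LBINT x=-a..a. cis (t * x)) = 0"
    by simp
  then show ?thesis
    using a False by (simp add: interval_integral_Icc set_lebesgue_integral_def t_def mult.assoc)
qed

lemma integral_trig_poly_norm_square:
  fixes c :: "int \<Rightarrow> complex" and K :: "int set"
  assumes a: "a > 0" and K: "finite K"
    and s: "\<And>x. s x = (\<Sum>k\<in>K. c k * cis ((\<xi> + pi / a * k) * x))"
  shows "integrable lborel (\<lambda>x. indicator {-a..a} x *\<^sub>R (s x * cnj (s x)))"
    and "(LINT x|lborel. indicator {-a..a} x *\<^sub>R (s x * cnj (s x))) =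
           of_real (2 * a * (\<Sum>k\<in>K. (cmod (c k))\<^sup>2))"
proof -
  define e where "e k x = indicator {-a..a} x *\<^sub>R cis (pi / a * k * x)" for k :: int and x :: real
  have e_int: "integrable lborel (e k)" for k
    unfolding e_def using a by (intro borel_integrable_compact) (auto intro!: continuous_intros)
  have expand: "indicator {-a..a} x *\<^sub>R (s x * cnj (s x)) =
      (\<Sum>k\<in>K. \<Sum>j\<in>K. c k * cnj (c j) * e (k - j) x)" for x
  proof -
    have "cis ((\<xi> + pi / a * k) * x) * cnj (cis ((\<xi> + pi / a * j) * x)) = cis (pi / a * (k - j) * x)"
      for k j :: int
      by (simp add: cis_cnj cis_mult algebra_simps)
    then have "s x * cnj (s x) = (\<Sum>k\<in>K. \<Sum>j\<in>K. c k * cnj (c j) * cis (pi / a * (k - j) * x))"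
      unfolding s cnj_sum sum_product by (simp add: mult_ac)
    then show ?thesis
      by (simp add: e_def scaleR_sum_right mult_scaleR_right)
  qed
  show "integrable lborel (\<lambda>x. indicator {-a..a} x *\<^sub>R (s x * cnj (s x)))"
    unfolding expand by (intro Bochner_Integration.integrable_sum integrable_mult_right e_int)
  have "(LINT x|lborel. indicator {-a..a} x *\<^sub>R (s x * cnj (s x))) =
      (\<Sum>k\<in>K. \<Sum>j\<in>K. c k * cnj (c j) * (LINT x|lborel. e (k - j) x))"
    unfolding expand
    by (simp add: Bochner_Integration.integral_sum Bochner_Integration.integrable_sum e_int)
  also have "\<dots> = (\<Sum>k\<in>K. c k * cnj (c k) * of_real (2 * a))"
    unfolding e_def integral_cis_symmetric_interval[OF a] using K by (simp add: if_distrib cong: if_cong)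
  also have "\<dots> = of_real (2 * a * (\<Sum>k\<in>K. (cmod (c k))\<^sup>2))"
    by (simp add: complex_norm_square[symmetric] sum_distrib_left sum_distrib_right mult_ac)
  finally show "(LINT x|lborel. indicator {-a..a} x *\<^sub>R (s x * cnj (s x))) =
      of_real (2 * a * (\<Sum>k\<in>K. (cmod (c k))\<^sup>2))" .
qed

definition fourier_integral :: "(real \<Rightarrow> real) \<Rightarrow> real \<Rightarrow> complex" where
  "fourier_integral g \<theta> = (LINT x|lborel. of_real (g x) * cis (- (x * \<theta>)))"

lemma fourier_integral_borel_measurable [measurable]:
  assumes [measurable]: "g \<in> borel_measurable lborel"
  shows "fourier_integral g \<in> borel_measurable lborel"
  unfolding fourier_integral_def[abs_def]
  by (rule lborel.borel_measurable_lebesgue_integral) measurable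

lemma integrable_of_real_mult_bounded:
  fixes g :: "real \<Rightarrow> real" and e :: "real \<Rightarrow> complex"
  assumes g: "integrable lborel g" and [measurable]: "e \<in> borel_measurable lborel"
    and e: "\<And>x. cmod (e x) \<le> 1"
  shows "integrable lborel (\<lambda>x. of_real (g x) * e x)"
proof (rule Bochner_Integration.integrable_bound[OF g])
  show "AE x in lborel. norm (of_real (g x) * e x) \<le> norm (g x)"
    using e by (intro AE_I2) (simp add: norm_mult mult_left_le)
qed (use g in measurable)

lemma integrable_fourier_integrand:
  "integrable lborel g \<Longrightarrow> integrable lborel (\<lambda>x. of_real (g x) * cis (t * x))"
  by (rule integrable_of_real_mult_bounded) auto

lemma integrable_if_square_integrable_bounded_support:
  fixes g :: "real \<Rightarrow> real"
  assumes [measurable]: "g \<in> borel_measurable lborel" and g2: "integrable lborel (\<lambda>x. (g x)\<^sup>2)"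
    and supp: "\<And>x. x \<notin> {-a..a} \<Longrightarrow> g x = 0"
  shows "integrable lborel g"
proof (rule Bochner_Integration.integrable_bound)
  show "integrable lborel (\<lambda>x. indicator {-a..a} x + (g x)\<^sup>2 :: real)"
    using g2 by (intro Bochner_Integration.integrable_add integrable_real_indicator)
      (auto simp: emeasure_lborel_Icc_eq)
  have "\<bar>g x\<bar> \<le> 1 + (g x)\<^sup>2" for x
    using zero_le_power2[of "\<bar>g x\<bar> - 1"] by (simp add: power2_eq_square algebra_simps)
  then show "AE x in lborel. norm (g x) \<le> norm (indicator {-a..a} x + (g x)\<^sup>2)"
    using supp by (intro AE_I2) (auto simp: indicator_def)
qed measurable

lemma cnj_fourier_integral:
  "cnj (fourier_integral g \<theta>) = (LINT x|lborel. of_real (g x) * cis (x * \<theta>))"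
  unfolding fourier_integral_def
  by (subst Bochner_Integration.integral_cnj[symmetric]) (simp add: cis_cnj)

text \<open>Bessel's inequality for the orthogonal system \<open>x \<mapsto> cis ((\<xi> + k \<pi>/a) x)\<close> on \<open>[-a, a]\<close>,
  obtained by expanding \<open>0 \<le> \<integral>\<^bsub>[-a,a]\<^esub> |g - s/(2a)|\<^sup>2\<close> for the partial Fourier sum \<open>s\<close>.\<close>
lemma bessel_inequality_fourier_integral:
  fixes g :: "real \<Rightarrow> real" and K :: "int set"
  assumes a: "a > 0" and [measurable]: "g \<in> borel_measurable lborel"
    and g2: "integrable lborel (\<lambda>x. (g x)\<^sup>2)" and supp: "\<And>x. x \<notin> {-a..a} \<Longrightarrow> g x = 0"
    and K: "finite K"
  shows "(\<Sum>k\<in>K. (cmod (fourier_integral g (\<xi> + pi / a * k)))\<^sup>2) \<le> 2 * a * (LINT x|lborel. (g x)\<^sup>2)"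
proof -
  define c where "c k = fourier_integral g (\<xi> + pi / a * k)" for k :: int
  define s where "s x = (\<Sum>k\<in>K. c k * cis ((\<xi> + pi / a * k) * x))" for x
  define S where "S = (\<Sum>k\<in>K. (cmod (c k))\<^sup>2)"
  define I where "I = (LINT x|lborel. (g x)\<^sup>2)"
  note ss = integral_trig_poly_norm_square[OF a K s_def]
  have g1: "integrable lborel g"
    using integrable_if_square_integrable_bounded_support[OF _ g2 supp] by simp
  have gs_eq: "(\<lambda>x. of_real (g x) * s x) =
      (\<lambda>x. \<Sum>k\<in>K. c k * (of_real (g x) * cis ((\<xi> + pi / a * k) * x)))"
    unfolding s_def by (simp add: sum_distrib_left algebra_simps)
  have gs_int: "integrable lborel (\<lambda>x. of_real (g x) * s x)"
    unfolding gs_eq by (intro Bochner_Integration.integrable_sum integrable_mult_right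
        integrable_fourier_integrand[OF g1])
  have "(LINT x|lborel. of_real (g x) * s x) =
      (\<Sum>k\<in>K. c k * (LINT x|lborel. of_real (g x) * cis ((\<xi> + pi / a * k) * x)))"
    unfolding gs_eq
    by (simp add: Bochner_Integration.integral_sum integrable_fourier_integrand[OF g1])
  also have "\<dots> = (\<Sum>k\<in>K. c k * cnj (c k))"
    unfolding c_def cnj_fourier_integral by (simp add: mult.commute)
  also have "\<dots> = of_real S"
    by (simp add: S_def complex_norm_square[symmetric])
  finally have gs: "(LINT x|lborel. of_real (g x) * s x) = of_real S" .
  have expand: "indicator {-a..a} x * (cmod (of_real (g x) - s x / of_real (2 * a)))\<^sup>2 =
      (g x)\<^sup>2 - 1 / a * Re (of_real (g x) * s x)
        + 1 / (4 * a\<^sup>2) * Re (indicator {-a..a} x *\<^sub>R (s x * cnj (s x)))" for x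
  proof (cases "x \<in> {-a..a}")
    case True
    have "Re (of_real (g x) - s x / of_real (2 * a)) = g x - Re (s x) / (2 * a)"
      and "Im (of_real (g x) - s x / of_real (2 * a)) = - Im (s x) / (2 * a)"
      by (simp_all add: Re_divide_of_real Im_divide_of_real)
    then show ?thesis
      using True a unfolding cmod_power2 by (simp add: cmod_power2[symmetric] power2_eq_square field_simps)
  qed (use supp in simp)
  have "0 \<le> (LINT x|lborel. indicator {-a..a} x * (cmod (of_real (g x) - s x / of_real (2 * a)))\<^sup>2)"
    by (intro integral_nonneg_AE) auto
  also have "\<dots> = I - 1 / a * Re (LINT x|lborel. of_real (g x) * s x)
      + 1 / (4 * a\<^sup>2) * Re (LINT x|lborel. indicator {-a..a} x *\<^sub>R (s x * cnj (s x)))"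
  proof -
    have i2: "integrable lborel (\<lambda>x. 1 / a * Re (of_real (g x) * s x))"
      using gs_int by (intro integrable_mult_right integrable_Re)
    have i3: "integrable lborel (\<lambda>x. 1 / (4 * a\<^sup>2) * Re (indicator {-a..a} x *\<^sub>R (s x * cnj (s x))))"
      using ss(1) by (intro integrable_mult_right integrable_Re)
    show ?thesis
      unfolding expand I_def
      by (simp only: Bochner_Integration.integral_add[OF Bochner_Integration.integrable_diff[OF g2 i2] i3]
          Bochner_Integration.integral_diff[OF g2 i2] integral_mult_right_zero
          integral_Re[OF gs_int] integral_Re[OF ss(1)])
  qed
  also have "\<dots> = I - S / (2 * a)"
    unfolding gs ss(2) S_def[symmetric] using a by (simp add: field_simps power2_eq_square)
  finally show ?thesis
    using a by (simp add: S_def c_def I_def field_simps)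
qed

lemma indicator_le_sum_cells:
  fixes h :: real and M :: nat
  assumes h: "h > 0"
  shows "indicator {-h * M..<h * M} \<xi> \<le>
           (\<Sum>k\<in>{-int M..<int M}. indicator {h * k..<h * (k + 1)} \<xi> :: ennreal)"
proof (cases "\<xi> \<in> {-h * M..<h * M}")
  case True
  define k where "k = \<lfloor>\<xi> / h\<rfloor>"
  have "k \<le> \<xi> / h" "\<xi> / h < k + 1"
    unfolding k_def by linarith+
  then have "h * k \<le> \<xi>" "\<xi> < h * (k + 1)"
    using h by (simp_all add: field_simps)
  moreover have "k \<in> {-int M..<int M}"
    using True h unfolding k_def by (auto simp: field_simps floor_less_iff le_floor_iff)
  ultimately show ?thesis
    by (intro member_le_sum[of k, THEN order_trans[rotated]]) (auto simp: indicator_def)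
qed simp

lemma nn_integral_cell_shift:
  fixes F :: "real \<Rightarrow> ennreal"
  assumes [measurable]: "F \<in> borel_measurable borel"
  shows "(\<integral>\<^sup>+\<xi>. indicator {h * k..<h * (k + 1)} \<xi> * F \<xi> \<partial>lborel) =
           (\<integral>\<^sup>+\<xi>. indicator {0..<h} \<xi> * F (\<xi> + h * k) \<partial>lborel)"
proof -
  have "(\<integral>\<^sup>+\<xi>. indicator {h * k..<h * (k + 1)} \<xi> * F \<xi> \<partial>lborel) =
      (\<integral>\<^sup>+\<xi>. indicator {h * k..<h * (k + 1)} (h * k + 1 * \<xi>) * F (h * k + 1 * \<xi>) \<partial>lborel)"
    by (subst nn_integral_real_affine[where c=1 and t="h * k"]) (simp_all, measurable)
  also have "\<dots> = (\<integral>\<^sup>+\<xi>. indicator {0..<h} \<xi> * F (\<xi> + h * k) \<partial>lborel)"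
    by (intro nn_integral_cong) (auto simp: indicator_def algebra_simps)
  finally show ?thesis .
qed

text \<open>Cutting \<open>[-M\<pi>/a, M\<pi>/a)\<close> into cells of length \<open>\<pi>/a\<close> and folding them onto \<open>[0, \<pi>/a)\<close>
  turns the integral into one over a sum controlled by Bessel's inequality.\<close>
lemma nn_integral_fourier_integral_box_le:
  fixes g :: "real \<Rightarrow> real" and M :: nat
  assumes a: "a > 0" and [measurable]: "g \<in> borel_measurable lborel"
    and g2: "integrable lborel (\<lambda>x. (g x)\<^sup>2)" and supp: "\<And>x. x \<notin> {-a..a} \<Longrightarrow> g x = 0"
  shows "(\<integral>\<^sup>+\<xi>. indicator {-(pi / a) * M..<(pi / a) * M} \<xi> * ennreal ((cmod (fourier_integral g \<xi>))\<^sup>2) \<partial>lborel)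
           \<le> ennreal (2 * pi * (LINT x|lborel. (g x)\<^sup>2))"
proof -
  define h where "h = pi / a"
  have h: "h > 0"
    using a by (simp add: h_def)
  define F where "F \<xi> = ennreal ((cmod (fourier_integral g \<xi>))\<^sup>2)" for \<xi>
  have [measurable]: "F \<in> borel_measurable borel"
    unfolding F_def by measurable
  define K where "K = {-int M..<int M}"
  define I where "I = (LINT x|lborel. (g x)\<^sup>2)"
  have "(\<integral>\<^sup>+\<xi>. indicator {-h * M..<h * M} \<xi> * F \<xi> \<partial>lborel)
      \<le> (\<integral>\<^sup>+\<xi>. (\<Sum>k\<in>K. indicator {h * k..<h * (k + 1)} \<xi>) * F \<xi> \<partial>lborel)"
    unfolding K_def by (intro nn_integral_mono mult_right_mono indicator_le_sum_cells[OF h]) simp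
  also have "\<dots> = (\<Sum>k\<in>K. \<integral>\<^sup>+\<xi>. indicator {0..<h} \<xi> * F (\<xi> + h * k) \<partial>lborel)"
    by (simp add: sum_distrib_right nn_integral_sum nn_integral_cell_shift)
  also have "\<dots> = (\<integral>\<^sup>+\<xi>. indicator {0..<h} \<xi> * (\<Sum>k\<in>K. F (\<xi> + h * k)) \<partial>lborel)"
    by (simp add: sum_distrib_left nn_integral_sum)
  also have "\<dots> \<le> (\<integral>\<^sup>+\<xi>. indicator {0..<h} \<xi> * ennreal (2 * a * I) \<partial>lborel)"
  proof (intro nn_integral_mono mult_left_mono)
    fix \<xi>
    have "(\<Sum>k\<in>K. F (\<xi> + h * k)) = ennreal (\<Sum>k\<in>K. (cmod (fourier_integral g (\<xi> + pi / a * k)))\<^sup>2)"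
      unfolding F_def h_def by (subst sum_ennreal) auto
    also have "\<dots> \<le> ennreal (2 * a * I)"
      unfolding I_def K_def by (intro ennreal_leI bessel_inequality_fourier_integral[OF a _ g2 supp]) auto
    finally show "(\<Sum>k\<in>K. F (\<xi> + h * k)) \<le> ennreal (2 * a * I)" .
  qed simp
  also have "\<dots> = ennreal (2 * a * I) * ennreal h"
    by (subst mult.commute) (simp add: nn_integral_cmult_indicator h less_imp_le)
  also have "\<dots> = ennreal (2 * pi * I)"
    using a h by (simp add: ennreal_mult'[symmetric] h_def I_def)
  finally show ?thesis
    unfolding h_def F_def I_def .
qed

lemma plancherel_inequality:
  fixes g :: "real \<Rightarrow> real"
  assumes a: "a > 0" and [measurable]: "g \<in> borel_measurable lborel"
    and g2: "integrable lborel (\<lambda>x. (g x)\<^sup>2)" and supp: "\<And>x. x \<notin> {-a..a} \<Longrightarrow> g x = 0"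
  shows "(\<integral>\<^sup>+\<xi>. ennreal ((cmod (fourier_integral g \<xi>))\<^sup>2) \<partial>lborel) \<le>
           ennreal (2 * pi * (LINT x|lborel. (g x)\<^sup>2))"
proof -
  define h where "h = pi / a"
  have h: "h > 0"
    using a by (simp add: h_def)
  define F where "F \<xi> = ennreal ((cmod (fourier_integral g \<xi>))\<^sup>2)" for \<xi>
  define f where "f M \<xi> = indicator {-h * real M..<h * real M} \<xi> * F \<xi>" for M :: nat and \<xi>
  have "incseq f"
  proof (intro incseq_SucI le_funI)
    fix M \<xi>
    have "{-h * real M..<h * real M} \<subseteq> {-h * real (Suc M)..<h * real (Suc M)}"
      using h by (auto simp: field_simps)
    then show "f M \<xi> \<le> f (Suc M) \<xi>"
      unfolding f_def by (intro mult_right_mono) (auto simp: indicator_def)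
  qed
  moreover have "f M \<in> borel_measurable lborel" for M
    unfolding f_def F_def by measurable
  moreover have "(\<lambda>M. f M \<xi>) \<longlonglongrightarrow> F \<xi>" for \<xi>
  proof (rule tendsto_eventually)
    obtain N :: nat where "\<bar>\<xi>\<bar> / h < N"
      using reals_Archimedean2 by blast
    then have "\<xi> \<in> {-h * real M..<h * real M}" if "N \<le> M" for M
    proof -
      have "\<bar>\<xi>\<bar> < h * N"
        using \<open>\<bar>\<xi>\<bar> / h < N\<close> h by (simp add: field_simps)
      also have "\<dots> \<le> h * M"
        using that h by simp
      finally show ?thesis
        by auto
    qed
    then show "\<forall>\<^sub>F M in sequentially. f M \<xi> = F \<xi>"
      unfolding eventually_sequentially f_def by (intro exI[of _ N]) simp
  qed
  ultimately have "(\<lambda>M. integral\<^sup>N lborel (f M)) \<longlonglongrightarrow> integral\<^sup>N lborel F"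
    by (rule nn_integral_LIMSEQ)
  moreover have "integral\<^sup>N lborel (f M) \<le> ennreal (2 * pi * (LINT x|lborel. (g x)\<^sup>2))" for M
    using nn_integral_fourier_integral_box_le[OF a _ g2 supp, of M] unfolding f_def F_def h_def by simp
  ultimately show ?thesis
    unfolding F_def by (intro LIMSEQ_le_const2) auto
qed

section \<open>Completeness of \<open>L\<^sup>2\<close>\<close>

lemma norm_add_power2_le:
  fixes a b :: "'a::real_normed_vector"
  shows "(norm (a + b))\<^sup>2 \<le> 2 * (norm a)\<^sup>2 + 2 * (norm b)\<^sup>2"
proof -
  have "(norm (a + b))\<^sup>2 \<le> (norm a + norm b)\<^sup>2"
    by (simp add: norm_triangle_ineq power_mono)
  also have "\<dots> \<le> 2 * (norm a)\<^sup>2 + 2 * (norm b)\<^sup>2"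
    using zero_le_power2[of "norm a - norm b"] by (simp add: power2_eq_square algebra_simps)
  finally show ?thesis .
qed

lemma AE_summable_of_nn_integral_geometric:
  fixes d :: "nat \<Rightarrow> real \<Rightarrow> complex"
  assumes [measurable]: "\<And>k. d k \<in> borel_measurable lborel"
    and d: "\<And>k. (\<integral>\<^sup>+\<xi>. ennreal ((cmod (d k \<xi>))\<^sup>2) \<partial>lborel) \<le> ennreal ((1 / 8) ^ k)"
  shows "AE \<xi> in lborel. summable (\<lambda>k. cmod (d k \<xi>))"
proof -
  \<comment> \<open>\<open>S\<close> has finite integral, so a.e. \<open>|d k \<xi>| \<le> C 2\<^sup>-\<^sup>k\<^sup>/\<^sup>2\<close>.\<close>
  define S where "S \<xi> = (\<Sum>k. ennreal (2 ^ k * (cmod (d k \<xi>))\<^sup>2))" for \<xi>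
  have [measurable]: "S \<in> borel_measurable lborel"
    unfolding S_def by measurable
  have "integral\<^sup>N lborel S = (\<Sum>k. \<integral>\<^sup>+\<xi>. ennreal (2 ^ k * (cmod (d k \<xi>))\<^sup>2) \<partial>lborel)"
    unfolding S_def by (rule nn_integral_suminf) measurable
  also have "\<dots> = (\<Sum>k. ennreal (2 ^ k) * \<integral>\<^sup>+\<xi>. ennreal ((cmod (d k \<xi>))\<^sup>2) \<partial>lborel)"
    by (intro suminf_cong) (simp add: ennreal_mult nn_integral_cmult)
  also have "\<dots> \<le> (\<Sum>k. ennreal ((1 / 4) ^ k))"
  proof (rule suminf_le)
    fix k
    have "ennreal (2 ^ k) * (\<integral>\<^sup>+\<xi>. ennreal ((cmod (d k \<xi>))\<^sup>2) \<partial>lborel) \<le> ennreal (2 ^ k) * ennreal ((1 / 8) ^ k)"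
      by (intro mult_left_mono d) simp
    then show "ennreal (2 ^ k) * (\<integral>\<^sup>+\<xi>. ennreal ((cmod (d k \<xi>))\<^sup>2) \<partial>lborel) \<le> ennreal ((1 / 4) ^ k)"
      by (simp add: ennreal_mult[symmetric] power_mult_distrib[symmetric])
  qed auto
  also have "\<dots> = ennreal (\<Sum>k. (1 / 4 :: real) ^ k)"
    by (rule suminf_ennreal2) auto
  also have "\<dots> < \<infinity>"
    by simp
  finally have "integral\<^sup>N lborel S \<noteq> \<infinity>"
    by simp
  then have "AE \<xi> in lborel. S \<xi> \<noteq> \<infinity>"
    by (intro nn_integral_noteq_infinite) measurable
  then show ?thesis
  proof eventually_elim
    case (elim \<xi>)
    define C where "C = enn2real (S \<xi>)"
    have tk: "2 ^ k * (cmod (d k \<xi>))\<^sup>2 \<le> C" for k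
    proof -
      have "ennreal (2 ^ k * (cmod (d k \<xi>))\<^sup>2) = (\<Sum>i\<in>{k}. ennreal (2 ^ i * (cmod (d i \<xi>))\<^sup>2))"
        by simp
      also have "\<dots> \<le> S \<xi>"
        unfolding S_def by (rule sum_le_suminf) auto
      also have "S \<xi> = ennreal C"
        unfolding C_def using elim by (simp add: less_top)
      finally show ?thesis
        by (subst (asm) ennreal_le_iff) (auto simp: C_def)
    qed
    have "cmod (d k \<xi>) \<le> sqrt C * (1 / sqrt 2) ^ k" for k
    proof -
      have "(cmod (d k \<xi>))\<^sup>2 \<le> C / 2 ^ k"
        using tk[of k] by (simp add: field_simps)
      then have "cmod (d k \<xi>) \<le> sqrt (C / 2 ^ k)"
        by (simp add: real_le_rsqrt)
      also have "\<dots> = sqrt C * (1 / sqrt 2) ^ k"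
        by (simp add: real_sqrt_divide real_sqrt_power power_one_over)
      finally show ?thesis .
    qed
    then show "summable (\<lambda>k. cmod (d k \<xi>))"
      by (intro summable_comparison_test[OF _ summable_mult[OF summable_geometric, of "1 / sqrt 2"]])
        auto
  qed
qed

lemma AE_convergent_of_fast_L2_Cauchy:
  fixes G :: "nat \<Rightarrow> real \<Rightarrow> complex"
  assumes [measurable]: "\<And>k. G k \<in> borel_measurable lborel"
    and fast: "\<And>k. (\<integral>\<^sup>+\<xi>. ennreal ((cmod (G (Suc k) \<xi> - G k \<xi>))\<^sup>2) \<partial>lborel) \<le> ennreal ((1 / 8) ^ k)"
  shows "AE \<xi> in lborel. convergent (\<lambda>k. G k \<xi>)"
proof -
  have "AE \<xi> in lborel. summable (\<lambda>k. cmod (G (Suc k) \<xi> - G k \<xi>))"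
    by (rule AE_summable_of_nn_integral_geometric[OF _ fast]) measurable
  then show ?thesis
  proof eventually_elim
    case (elim \<xi>)
    then have "summable (\<lambda>j. G (Suc j) \<xi> - G j \<xi>)"
      by (rule summable_norm_cancel)
    then have "(\<lambda>k. G 0 \<xi> + (\<Sum>j<k. G (Suc j) \<xi> - G j \<xi>)) \<longlonglongrightarrow> G 0 \<xi> + (\<Sum>j. G (Suc j) \<xi> - G j \<xi>)"
      by (intro tendsto_add tendsto_const summable_LIMSEQ)
    moreover have "G 0 \<xi> + (\<Sum>j<k. G (Suc j) \<xi> - G j \<xi>) = G k \<xi>" for k
      by (induction k) (simp_all add: add.assoc[symmetric])
    ultimately show ?case
      by (auto simp: convergent_def)
  qed
qed

lemma nn_integral_norm_square_limit_le:
  fixes H :: "nat \<Rightarrow> real \<Rightarrow> complex"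
  assumes [measurable]: "\<And>k. H k \<in> borel_measurable lborel" "g \<in> borel_measurable lborel"
    and lim: "AE \<xi> in lborel. (\<lambda>k. H k \<xi>) \<longlonglongrightarrow> v \<xi>"
    and bound: "\<forall>\<^sub>F k in sequentially. (\<integral>\<^sup>+\<xi>. ennreal ((cmod (H k \<xi> - g \<xi>))\<^sup>2) \<partial>lborel) \<le> B"
  shows "(\<integral>\<^sup>+\<xi>. ennreal ((cmod (v \<xi> - g \<xi>))\<^sup>2) \<partial>lborel) \<le> B"
proof -
  have "(\<integral>\<^sup>+\<xi>. ennreal ((cmod (v \<xi> - g \<xi>))\<^sup>2) \<partial>lborel) =
      (\<integral>\<^sup>+\<xi>. liminf (\<lambda>k. ennreal ((cmod (H k \<xi> - g \<xi>))\<^sup>2)) \<partial>lborel)"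
    using lim
  proof (intro nn_integral_cong_AE, eventually_elim)
    case (elim \<xi>)
    then have "(\<lambda>k. ennreal ((cmod (H k \<xi> - g \<xi>))\<^sup>2)) \<longlonglongrightarrow> ennreal ((cmod (v \<xi> - g \<xi>))\<^sup>2)"
      by (intro tendsto_intros)
    then show ?case
      by (rule lim_imp_Liminf[symmetric, rotated]) simp
  qed
  also have "\<dots> \<le> liminf (\<lambda>k. \<integral>\<^sup>+\<xi>. ennreal ((cmod (H k \<xi> - g \<xi>))\<^sup>2) \<partial>lborel)"
    by (rule nn_integral_liminf) measurable
  also have "\<dots> \<le> B"
    using bound by (intro Liminf_le) simp_all
  finally show ?thesis .
qed

lemma integrable_norm_square_of_near:
  fixes v g :: "real \<Rightarrow> complex"
  assumes [measurable]: "v \<in> borel_measurable lborel" "g \<in> borel_measurable lborel"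
    and near: "(\<integral>\<^sup>+\<xi>. ennreal ((cmod (v \<xi> - g \<xi>))\<^sup>2) \<partial>lborel) < \<infinity>"
    and g: "(\<integral>\<^sup>+\<xi>. ennreal ((cmod (g \<xi>))\<^sup>2) \<partial>lborel) < \<infinity>"
  shows "integrable lborel (\<lambda>\<xi>. (cmod (v \<xi>))\<^sup>2)"
proof (rule integrableI_bounded)
  have "(\<integral>\<^sup>+\<xi>. ennreal (norm ((cmod (v \<xi>))\<^sup>2)) \<partial>lborel)
      \<le> (\<integral>\<^sup>+\<xi>. 2 * ennreal ((cmod (v \<xi> - g \<xi>))\<^sup>2) + 2 * ennreal ((cmod (g \<xi>))\<^sup>2) \<partial>lborel)"
  proof (intro nn_integral_mono)
    fix \<xi>
    show "ennreal (norm ((cmod (v \<xi>))\<^sup>2)) \<le> 2 * ennreal ((cmod (v \<xi> - g \<xi>))\<^sup>2) + 2 * ennreal ((cmod (g \<xi>))\<^sup>2)"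
    proof -
      have "ennreal ((cmod (v \<xi>))\<^sup>2) \<le> ennreal (2 * (cmod (v \<xi> - g \<xi>))\<^sup>2 + 2 * (cmod (g \<xi>))\<^sup>2)"
        using norm_add_power2_le[of "v \<xi> - g \<xi>" "g \<xi>"] by (intro ennreal_leI) simp
      then show ?thesis
        by (simp add: ennreal_plus ennreal_mult)
    qed
  qed
  also have "\<dots> < \<infinity>"
    using near g by (simp add: nn_integral_add nn_integral_cmult ennreal_mult_less_top)
  finally show "(\<integral>\<^sup>+\<xi>. ennreal (norm ((cmod (v \<xi>))\<^sup>2)) \<partial>lborel) < \<infinity>" .
qed measurable

lemma L2_limit_of_Cauchy:
  fixes G :: "nat \<Rightarrow> real \<Rightarrow> complex" and \<delta> :: "nat \<Rightarrow> real"
  assumes [measurable]: "\<And>n. G n \<in> borel_measurable lborel"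
    and G0: "(\<integral>\<^sup>+\<xi>. ennreal ((cmod (G 0 \<xi>))\<^sup>2) \<partial>lborel) < \<infinity>"
    and Cauchy: "\<And>n m. n \<le> m \<Longrightarrow> (\<integral>\<^sup>+\<xi>. ennreal ((cmod (G m \<xi> - G n \<xi>))\<^sup>2) \<partial>lborel) \<le> ennreal (\<delta> n)"
    and \<delta>: "\<delta> \<longlonglongrightarrow> 0"
  shows "\<exists>v. v \<in> borel_measurable lborel \<and> integrable lborel (\<lambda>\<xi>. (cmod (v \<xi>))\<^sup>2) \<and>
           (\<lambda>n. \<integral>\<^sup>+\<xi>. ennreal ((cmod (v \<xi> - G n \<xi>))\<^sup>2) \<partial>lborel) \<longlonglongrightarrow> 0"
proof -
  have "\<exists>N. \<forall>n\<ge>N. \<delta> n < (1 / 8) ^ k" for k :: nat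
    using order_tendstoD(2)[OF \<delta>, of "(1 / 8) ^ k"] by (simp add: eventually_sequentially)
  then obtain N where N: "\<And>k n. N k \<le> n \<Longrightarrow> \<delta> n < (1 / 8) ^ k"
    by metis
  \<comment> \<open>A subsequence along which consecutive differences are \<open>O(8\<^sup>-\<^sup>k)\<close> in \<open>L\<^sup>2\<close>, hence
      summable almost everywhere; its pointwise limit is the candidate.\<close>
  define s where "s k = k + (\<Sum>j\<le>k. N j)" for k
  have s: "k \<le> s k" "N k \<le> s k" "s k \<le> s (Suc k)" for k
    unfolding s_def using member_le_sum[of k "{..k}" N] by auto
  have "(\<integral>\<^sup>+\<xi>. ennreal ((cmod (G (s (Suc k)) \<xi> - G (s k) \<xi>))\<^sup>2) \<partial>lborel) \<le> ennreal ((1 / 8) ^ k)" for k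
    using Cauchy[OF s(3)] N[OF s(2)] by (meson ennreal_leI less_imp_le order_trans)
  then have "AE \<xi> in lborel. convergent (\<lambda>k. G (s k) \<xi>)"
    by (intro AE_convergent_of_fast_L2_Cauchy) measurable
  then have lim: "AE \<xi> in lborel. (\<lambda>k. G (s k) \<xi>) \<longlonglongrightarrow> lim (\<lambda>k. G (s k) \<xi>)"
    by eventually_elim (simp add: convergent_LIMSEQ_iff)
  define v where "v \<xi> = lim (\<lambda>k. G (s k) \<xi>)" for \<xi>
  have [measurable]: "v \<in> borel_measurable lborel"
    unfolding v_def by measurable
  have bound: "(\<integral>\<^sup>+\<xi>. ennreal ((cmod (v \<xi> - G n \<xi>))\<^sup>2) \<partial>lborel) \<le> ennreal (\<delta> n)" for n
    using lim unfolding v_def[symmetric]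
  proof (rule nn_integral_norm_square_limit_le[rotated 2])
    show "\<forall>\<^sub>F k in sequentially. (\<integral>\<^sup>+\<xi>. ennreal ((cmod (G (s k) \<xi> - G n \<xi>))\<^sup>2) \<partial>lborel) \<le> ennreal (\<delta> n)"
      unfolding eventually_sequentially
    proof (intro exI[of _ n] allI impI)
      fix k
      assume "n \<le> k"
      then show "(\<integral>\<^sup>+\<xi>. ennreal ((cmod (G (s k) \<xi> - G n \<xi>))\<^sup>2) \<partial>lborel) \<le> ennreal (\<delta> n)"
        by (intro Cauchy le_trans[OF _ s(1)])
    qed
  qed measurable
  have "(\<lambda>n. \<integral>\<^sup>+\<xi>. ennreal ((cmod (v \<xi> - G n \<xi>))\<^sup>2) \<partial>lborel) \<longlonglongrightarrow> 0"
    using bound by (intro tendsto_sandwich[OF _ _ tendsto_const tendsto_ennrealI[OF \<delta>, simplified]]) auto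
  moreover have "integrable lborel (\<lambda>\<xi>. (cmod (v \<xi>))\<^sup>2)"
    using G0 order.strict_trans1[OF bound[of 0]]
    by (intro integrable_norm_square_of_near[of _ "G 0"]) auto
  ultimately show ?thesis
    by (intro exI[of _ v]) simp
qed

section \<open>The Plancherel transform\<close>

lemma ft_trunc_eq_fourier_integral:
  "ft_trunc u n \<xi> = fourier_integral (\<lambda>x. indicator {-n..n} x * u x) \<xi> / of_real (sqrt (2 * pi))"
  unfolding ft_trunc_def fourier_integral_def set_lebesgue_integral_def
  by (simp add: scaleR_conv_of_real mult.assoc)

lemma ft_trunc_borel_measurable [measurable]:
  assumes [measurable]: "u \<in> borel_measurable lborel"
  shows "ft_trunc u n \<in> borel_measurable lborel"
  unfolding ft_trunc_eq_fourier_integral[abs_def] by measurable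

lemma fourier_integral_diff:
  assumes "integrable lborel g" "integrable lborel h"
  shows "fourier_integral g \<xi> - fourier_integral h \<xi> = fourier_integral (\<lambda>x. g x - h x) \<xi>"
  unfolding fourier_integral_def
  using integrable_fourier_integrand[OF assms(1), of "- \<xi>"] integrable_fourier_integrand[OF assms(2), of "- \<xi>"]
  by (subst Bochner_Integration.integral_diff[symmetric]) (simp_all add: algebra_simps)

lemma square_integrable_if_dominated:
  fixes g u :: "real \<Rightarrow> real"
  assumes "integrable lborel (\<lambda>x. (u x)\<^sup>2)" "g \<in> borel_measurable lborel" "\<And>x. \<bar>g x\<bar> \<le> \<bar>u x\<bar>"
  shows "integrable lborel (\<lambda>x. (g x)\<^sup>2)"
  using assms by (intro Bochner_Integration.integrable_bound[OF assms(1)] AE_I2)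
    (auto simp: abs_le_square_iff[symmetric])

lemma normalized_plancherel_inequality:
  fixes g :: "real \<Rightarrow> real"
  assumes a: "a > 0" and [measurable]: "g \<in> borel_measurable lborel"
    and g2: "integrable lborel (\<lambda>x. (g x)\<^sup>2)" and supp: "\<And>x. x \<notin> {-a..a} \<Longrightarrow> g x = 0"
  shows "(\<integral>\<^sup>+\<xi>. ennreal ((cmod (fourier_integral g \<xi> / of_real (sqrt (2 * pi))))\<^sup>2) \<partial>lborel) \<le>
           ennreal (LINT x|lborel. (g x)\<^sup>2)"
proof -
  have "(\<integral>\<^sup>+\<xi>. ennreal ((cmod (fourier_integral g \<xi> / of_real (sqrt (2 * pi))))\<^sup>2) \<partial>lborel) =
      ennreal (1 / (2 * pi)) * (\<integral>\<^sup>+\<xi>. ennreal ((cmod (fourier_integral g \<xi>))\<^sup>2) \<partial>lborel)"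
    by (subst nn_integral_cmult[symmetric])
       (auto intro!: nn_integral_cong simp: norm_divide power_divide ennreal_mult[symmetric])
  also have "\<dots> \<le> ennreal (1 / (2 * pi)) * ennreal (2 * pi * (LINT x|lborel. (g x)\<^sup>2))"
    by (intro mult_left_mono plancherel_inequality[OF a _ g2 supp]) simp_all
  also have "\<dots> = ennreal (LINT x|lborel. (g x)\<^sup>2)"
    by (simp add: ennreal_mult[symmetric] integral_nonneg_AE)
  finally show ?thesis .
qed

lemma ft_trunc_Cauchy:
  fixes u :: "real \<Rightarrow> real" and n m :: nat
  assumes [measurable]: "u \<in> borel_measurable lborel" and u2: "integrable lborel (\<lambda>x. (u x)\<^sup>2)"
    and nm: "n \<le> m"
  shows "(\<integral>\<^sup>+\<xi>. ennreal ((cmod (ft_trunc u m \<xi> - ft_trunc u n \<xi>))\<^sup>2) \<partial>lborel) \<le>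
           ennreal (LINT x|lborel. indicator (- {-real n..real n}) x * (u x)\<^sup>2)"
proof -
  define g where "g x = indicator {-real m..real m} x * u x - indicator {-real n..real n} x * u x" for x
  have [measurable]: "g \<in> borel_measurable lborel"
    unfolding g_def by measurable
  have g_le: "\<bar>g x\<bar> \<le> \<bar>u x\<bar>" for x
    using nm unfolding g_def by (auto simp: indicator_def)
  have g2: "integrable lborel (\<lambda>x. (g x)\<^sup>2)"
    by (rule square_integrable_if_dominated[OF u2 _ g_le]) measurable
  have "integrable lborel (\<lambda>x. indicator {-b..b} x * u x)" for b :: real
  proof -
    have "integrable lborel (\<lambda>x. (indicator {-b..b} x * u x)\<^sup>2)"
      by (rule square_integrable_if_dominated[OF u2]) (auto simp: indicator_def)
    from integrable_if_square_integrable_bounded_support[where a=b, OF _ this] show ?thesis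
      by (auto simp: indicator_def)
  qed
  then have "ft_trunc u m \<xi> - ft_trunc u n \<xi> = fourier_integral g \<xi> / of_real (sqrt (2 * pi))" for \<xi>
    unfolding ft_trunc_eq_fourier_integral g_def by (simp add: diff_divide_distrib[symmetric] fourier_integral_diff)
  then have "(\<integral>\<^sup>+\<xi>. ennreal ((cmod (ft_trunc u m \<xi> - ft_trunc u n \<xi>))\<^sup>2) \<partial>lborel) =
      (\<integral>\<^sup>+\<xi>. ennreal ((cmod (fourier_integral g \<xi> / of_real (sqrt (2 * pi))))\<^sup>2) \<partial>lborel)"
    by simp
  also have "\<dots> \<le> ennreal (LINT x|lborel. (g x)\<^sup>2)"
    by (rule normalized_plancherel_inequality[where a="real m + 1", OF _ _ g2])
      (use nm in \<open>auto simp: g_def indicator_def\<close>)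
  also have "\<dots> \<le> ennreal (LINT x|lborel. indicator (- {-real n..real n}) x * (u x)\<^sup>2)"
  proof (intro ennreal_leI integral_mono[OF g2])
    show "integrable lborel (\<lambda>x. indicator (- {-real n..real n}) x * (u x)\<^sup>2)"
      using integrable_mult_indicator[OF _ u2, of "- {-real n..real n}"] by simp
  qed (use nm in \<open>auto simp: g_def indicator_def\<close>)
  finally show ?thesis .
qed

lemma tail_integral_tendsto_zero:
  fixes f :: "real \<Rightarrow> real"
  assumes f: "integrable lborel f"
  shows "(\<lambda>n. LINT x|lborel. indicator (- {-real n..real n}) x * f x) \<longlonglongrightarrow> 0"
proof -
  have "(\<lambda>n. LINT x|lborel. indicator (- {-real n..real n}) x * f x) \<longlonglongrightarrow> (LINT x::real|lborel. 0)"
  proof (rule Bochner_Integration.integral_dominated_convergence[where w="\<lambda>x. \<bar>f x\<bar>"])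
    show "AE x in lborel. (\<lambda>n. indicator (- {-real n..real n}) x * f x) \<longlonglongrightarrow> 0"
    proof (intro AE_I2 tendsto_eventually)
      fix x :: real
      obtain N :: nat where "\<bar>x\<bar> \<le> N"
        using real_arch_simple by blast
      then show "\<forall>\<^sub>F n in sequentially. indicator (- {-real n..real n}) x * f x = 0"
        unfolding eventually_sequentially by (intro exI[of _ N]) (auto simp: indicator_def)
    qed
  qed (use f in \<open>auto simp: indicator_def\<close>)
  then show ?thesis
    by simp
qed

lemma is_fourier_L2_exists:
  assumes um [measurable]: "u \<in> borel_measurable lborel" and u2: "integrable lborel (\<lambda>x. (u x)\<^sup>2)"
  shows "\<exists>v. is_fourier_L2 u v"
proof -
  have "(\<integral>\<^sup>+\<xi>. ennreal ((cmod (ft_trunc u (real 0) \<xi>))\<^sup>2) \<partial>lborel) \<le>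
      ennreal (LINT x|lborel. (indicator {-real 0..real 0} x * u x)\<^sup>2)"
    unfolding ft_trunc_eq_fourier_integral
  proof (rule normalized_plancherel_inequality[where a=1])
    show "integrable lborel (\<lambda>x. (indicator {- real 0..real 0} x * u x)\<^sup>2)"
      by (rule square_integrable_if_dominated[OF u2]) (auto simp: indicator_def)
  qed auto
  also have "\<dots> < \<infinity>"
    by simp
  finally have G0: "(\<integral>\<^sup>+\<xi>. ennreal ((cmod (ft_trunc u (real 0) \<xi>))\<^sup>2) \<partial>lborel) < \<infinity>" .
  obtain v where "v \<in> borel_measurable lborel" "integrable lborel (\<lambda>\<xi>. (cmod (v \<xi>))\<^sup>2)"
    "(\<lambda>n. \<integral>\<^sup>+\<xi>. ennreal ((cmod (v \<xi> - ft_trunc u (real n) \<xi>))\<^sup>2) \<partial>lborel) \<longlonglongrightarrow> 0"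
    using L2_limit_of_Cauchy[where G="\<lambda>n. ft_trunc u (real n)", OF _ G0 _ tail_integral_tendsto_zero[OF u2]]
      ft_trunc_Cauchy[OF um u2]
    by auto
  then show ?thesis
    unfolding is_fourier_L2_def by blast
qed

lemma is_fourier_L2_unique:
  assumes [measurable]: "u \<in> borel_measurable lborel"
    and v: "is_fourier_L2 u v" and v': "is_fourier_L2 u v'"
  shows "AE \<xi> in lborel. v \<xi> = v' \<xi>"
proof -
  have [measurable]: "v \<in> borel_measurable lborel" "v' \<in> borel_measurable lborel"
    using v v' unfolding is_fourier_L2_def by auto
  define A where "A n = (\<integral>\<^sup>+\<xi>. ennreal ((cmod (v \<xi> - ft_trunc u (real n) \<xi>))\<^sup>2) \<partial>lborel)" for n
  define B where "B n = (\<integral>\<^sup>+\<xi>. ennreal ((cmod (v' \<xi> - ft_trunc u (real n) \<xi>))\<^sup>2) \<partial>lborel)" for n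
  have "(\<lambda>n. 2 * A n + 2 * B n) \<longlonglongrightarrow> 2 * 0 + 2 * 0"
    using v v' unfolding is_fourier_L2_def A_def B_def
    by (intro tendsto_add ennreal_tendsto_cmult) auto
  then have AB: "(\<lambda>n. 2 * A n + 2 * B n) \<longlonglongrightarrow> 0"
    by simp have "(\<integral>\<^sup>+\<xi>. ennreal ((cmod (v \<xi> - v' \<xi>))\<^sup>2) \<partial>lborel) \<le> 2 * A n + 2 * B n" for n
  proof -
    have "(\<integral>\<^sup>+\<xi>. ennreal ((cmod (v \<xi> - v' \<xi>))\<^sup>2) \<partial>lborel) \<le>
        (\<integral>\<^sup>+\<xi>. 2 * ennreal ((cmod (v \<xi> - ft_trunc u n \<xi>))\<^sup>2) + 2 * ennreal ((cmod (v' \<xi> - ft_trunc u n \<xi>))\<^sup>2) \<partial>lborel)"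
    proof (intro nn_integral_mono)
      fix \<xi>
      have "ennreal ((cmod (v \<xi> - v' \<xi>))\<^sup>2) \<le>
          ennreal (2 * (cmod (v \<xi> - ft_trunc u n \<xi>))\<^sup>2 + 2 * (cmod (v' \<xi> - ft_trunc u n \<xi>))\<^sup>2)"
        using norm_add_power2_le[of "v \<xi> - ft_trunc u n \<xi>" "ft_trunc u n \<xi> - v' \<xi>"]
        by (intro ennreal_leI) (simp add: norm_minus_commute)
      then show "ennreal ((cmod (v \<xi> - v' \<xi>))\<^sup>2) \<le>
          2 * ennreal ((cmod (v \<xi> - ft_trunc u n \<xi>))\<^sup>2) + 2 * ennreal ((cmod (v' \<xi> - ft_trunc u n \<xi>))\<^sup>2)"
        by (simp add: ennreal_plus ennreal_mult)
    qed
    also have "\<dots> = 2 * A n + 2 * B n"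
      unfolding A_def B_def by (simp add: nn_integral_add nn_integral_cmult)
    finally show ?thesis .
  qed
  then have "(\<integral>\<^sup>+\<xi>. ennreal ((cmod (v \<xi> - v' \<xi>))\<^sup>2) \<partial>lborel) \<le> 0"
    by (intro LIMSEQ_le_const[OF AB]) auto
  then have "(\<integral>\<^sup>+\<xi>. ennreal ((cmod (v \<xi> - v' \<xi>))\<^sup>2) \<partial>lborel) = 0"
    by simp
  then have "AE \<xi> in lborel. ennreal ((cmod (v \<xi> - v' \<xi>))\<^sup>2) = 0"
    by (subst (asm) nn_integral_0_iff_AE) auto
  then show ?thesis
    by eventually_elim simp
qed

lemma ft_trunc_scale: "ft_trunc (\<lambda>x. t * u x) n \<xi> = of_real t * ft_trunc u n \<xi>"
proof -
  have "(LINT x:{-n..n}|lborel. of_real (t * u x) * cis (- (x * \<xi>))) =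
      (LINT x|lborel. of_real t * (indicator {-n..n} x *\<^sub>R (of_real (u x) * cis (- (x * \<xi>)))))"
    unfolding set_lebesgue_integral_def by (simp add: scaleR_conv_of_real mult_ac)
  also have "\<dots> = of_real t * (LINT x:{-n..n}|lborel. of_real (u x) * cis (- (x * \<xi>)))"
    unfolding set_lebesgue_integral_def by (rule integral_mult_right_zero)
  finally show ?thesis
    unfolding ft_trunc_def by simp
qed

lemma is_fourier_L2_scale:
  assumes [measurable]: "u \<in> borel_measurable lborel" and v: "is_fourier_L2 u v"
  shows "is_fourier_L2 (\<lambda>x. t * u x) (\<lambda>\<xi>. of_real t * v \<xi>)"
proof -
  have [measurable]: "v \<in> borel_measurable lborel"
    using v unfolding is_fourier_L2_def by simp
  have "(\<integral>\<^sup>+\<xi>. ennreal ((cmod (of_real t * v \<xi> - ft_trunc (\<lambda>x. t * u x) n \<xi>))\<^sup>2) \<partial>lborel) =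
      ennreal (t\<^sup>2) * (\<integral>\<^sup>+\<xi>. ennreal ((cmod (v \<xi> - ft_trunc u n \<xi>))\<^sup>2) \<partial>lborel)" for n
    unfolding ft_trunc_scale right_diff_distrib[symmetric]
    by (subst nn_integral_cmult[symmetric])
       (auto simp: norm_mult power_mult_distrib ennreal_mult)
  moreover have "(\<lambda>n. ennreal (t\<^sup>2) * (\<integral>\<^sup>+\<xi>. ennreal ((cmod (v \<xi> - ft_trunc u (real n) \<xi>))\<^sup>2) \<partial>lborel))
      \<longlonglongrightarrow> ennreal (t\<^sup>2) * 0"
    using v unfolding is_fourier_L2_def by (intro ennreal_tendsto_cmult) auto
  moreover have "integrable lborel (\<lambda>\<xi>. (cmod (of_real t * v \<xi>))\<^sup>2)"
    using v unfolding is_fourier_L2_def norm_mult power_mult_distrib by simp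
  ultimately show ?thesis
    unfolding is_fourier_L2_def by simp
qed

lemma is_fourier_L2_fourier_L2:
  assumes "u \<in> borel_measurable lborel" "integrable lborel (\<lambda>x. (u x)\<^sup>2)"
  shows "is_fourier_L2 u (fourier_L2 u)"
  unfolding fourier_L2_def using is_fourier_L2_exists[OF assms] by (rule someI_ex)

lemma fourier_L2_borel_measurable:
  assumes "u \<in> borel_measurable lborel" "integrable lborel (\<lambda>x. (u x)\<^sup>2)"
  shows "fourier_L2 u \<in> borel_measurable lborel"
  using is_fourier_L2_fourier_L2[OF assms] unfolding is_fourier_L2_def by simp

text \<open>\<open>fourier_L2\<close> is chosen by Hilbert choice, so it is linear only almost everywhere.\<close>
lemma fourier_L2_scale_AE:
  assumes [measurable]: "u \<in> borel_measurable lborel" and u2: "integrable lborel (\<lambda>x. (u x)\<^sup>2)"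
  shows "AE \<xi> in lborel. fourier_L2 (\<lambda>x. t * u x) \<xi> = of_real t * fourier_L2 u \<xi>"
proof (rule is_fourier_L2_unique)
  have "integrable lborel (\<lambda>x. (t * u x)\<^sup>2)"
    using integrable_mult_right[OF u2, of "t\<^sup>2"] by (simp add: power_mult_distrib)
  then show "is_fourier_L2 (\<lambda>x. t * u x) (fourier_L2 (\<lambda>x. t * u x))"
    by (intro is_fourier_L2_fourier_L2) simp_all
  show "is_fourier_L2 (\<lambda>x. t * u x) (\<lambda>\<xi>. of_real t * fourier_L2 u \<xi>)"
    by (intro is_fourier_L2_scale is_fourier_L2_fourier_L2 u2) simp_all
qed simp

section \<open>Sobolev spaces and the functionals\<close>

lemma sobolevD:
  assumes "u \<in> sobolev s"
  shows "u \<in> borel_measurable lborel" "integrable lborel (\<lambda>x. (u x)\<^sup>2)"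
    and "integrable lborel (\<lambda>\<xi>. (1 + \<xi>\<^sup>2) powr s * (cmod (fourier_L2 u \<xi>))\<^sup>2)"
    and "fourier_L2 u \<in> borel_measurable lborel"
  using assms fourier_L2_borel_measurable[of u] unfolding sobolev_def by auto

lemma integrable_weighted_fourier_L2:
  assumes u: "u \<in> sobolev s" and [measurable]: "f \<in> borel_measurable lborel"
    and f: "\<And>\<xi>. \<bar>f \<xi>\<bar> \<le> C * (1 + \<xi>\<^sup>2) powr s"
  shows "integrable lborel (\<lambda>\<xi>. f \<xi> * (cmod (fourier_L2 u \<xi>))\<^sup>2)"
proof (rule Bochner_Integration.integrable_bound)
  show "integrable lborel (\<lambda>\<xi>. C * ((1 + \<xi>\<^sup>2) powr s * (cmod (fourier_L2 u \<xi>))\<^sup>2))"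
    using sobolevD(3)[OF u] by (rule integrable_mult_right)
  have "\<bar>f \<xi>\<bar> * (cmod (fourier_L2 u \<xi>))\<^sup>2 \<le> \<bar>C * ((1 + \<xi>\<^sup>2) powr s * (cmod (fourier_L2 u \<xi>))\<^sup>2)\<bar>" for \<xi>
  proof -
    have "\<bar>f \<xi>\<bar> * (cmod (fourier_L2 u \<xi>))\<^sup>2 \<le> C * (1 + \<xi>\<^sup>2) powr s * (cmod (fourier_L2 u \<xi>))\<^sup>2"
      by (intro mult_right_mono f) simp
    also have "\<dots> \<le> \<bar>C * ((1 + \<xi>\<^sup>2) powr s * (cmod (fourier_L2 u \<xi>))\<^sup>2)\<bar>"
      by (simp add: mult_ac)
    finally show ?thesis .
  qed
  then show "AE \<xi> in lborel. norm (f \<xi> * (cmod (fourier_L2 u \<xi>))\<^sup>2) \<le>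
      norm (C * ((1 + \<xi>\<^sup>2) powr s * (cmod (fourier_L2 u \<xi>))\<^sup>2))"
    by (intro AE_I2) (simp add: abs_mult)
qed (use sobolevD(4)[OF u] in measurable)

lemma sobolev_scale:
  assumes u: "u \<in> sobolev s"
  shows "(\<lambda>x. t * u x) \<in> sobolev s"
proof -
  note [measurable] = sobolevD(1,4)[OF u]
  have tu2: "integrable lborel (\<lambda>x. (t * u x)\<^sup>2)"
    using integrable_mult_right[OF sobolevD(2)[OF u], of "t\<^sup>2"] by (simp add: power_mult_distrib)
  have [measurable]: "fourier_L2 (\<lambda>x. t * u x) \<in> borel_measurable lborel"
    by (rule fourier_L2_borel_measurable[OF _ tu2]) simp
  have "integrable lborel (\<lambda>\<xi>. (1 + \<xi>\<^sup>2) powr s * (cmod (fourier_L2 (\<lambda>x. t * u x) \<xi>))\<^sup>2)"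
  proof (rule integrable_cong_AE_imp)
    show "integrable lborel (\<lambda>\<xi>. t\<^sup>2 * ((1 + \<xi>\<^sup>2) powr s * (cmod (fourier_L2 u \<xi>))\<^sup>2))"
      using sobolevD(3)[OF u] by (rule integrable_mult_right)
    show "AE \<xi> in lborel. t\<^sup>2 * ((1 + \<xi>\<^sup>2) powr s * (cmod (fourier_L2 u \<xi>))\<^sup>2) =
        (1 + \<xi>\<^sup>2) powr s * (cmod (fourier_L2 (\<lambda>x. t * u x) \<xi>))\<^sup>2"
      using fourier_L2_scale_AE[OF sobolevD(1,2)[OF u], of t]
      by eventually_elim (simp add: norm_mult power_mult_distrib)
  qed measurable
  then show ?thesis
    unfolding sobolev_def using tu2 by simp
qed

lemma sobolev_antimono: "s' \<le> s \<Longrightarrow> sobolev s \<subseteq> sobolev s'"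
proof
  fix u
  assume "s' \<le> s" and u: "u \<in> sobolev s"
  then have "integrable lborel (\<lambda>\<xi>. (1 + \<xi>\<^sup>2) powr s' * (cmod (fourier_L2 u \<xi>))\<^sup>2)"
    by (intro integrable_weighted_fourier_L2[OF u, where C=1]) (simp_all add: powr_mono)
  then show "u \<in> sobolev s'"
    using u unfolding sobolev_def by simp
qed

lemma Qf_scale: "Qf p (\<lambda>x. t * u x) = \<bar>t\<bar> powr (p + 1) * Qf p u"
  unfolding Qf_def by (simp add: abs_mult powr_mult)

lemma LB_norm2_scale:
  assumes [measurable]: "l \<in> borel_measurable lborel" "b \<in> borel_measurable lborel"
    and u: "u \<in> sobolev s"
  shows "LB_norm2 l b (\<lambda>x. t * u x) = t\<^sup>2 * LB_norm2 l b u"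
proof -
  note [measurable] = sobolevD(4)[OF u] sobolevD(4)[OF sobolev_scale[OF u]]
  have "LB_norm2 l b (\<lambda>x. t * u x) = (LINT \<xi>|lborel. t\<^sup>2 * (l \<xi> / b \<xi> * (cmod (fourier_L2 u \<xi>))\<^sup>2))"
    unfolding LB_norm2_def
    by (rule integral_cong_AE) (use fourier_L2_scale_AE[OF sobolevD(1,2)[OF u], of t] in
        \<open>measurable, eventually_elim, simp add: norm_mult power_mult_distrib\<close>)
  then show ?thesis
    unfolding LB_norm2_def by (simp only: integral_mult_right_zero)
qed

lemma B_norm2_scale:
  assumes [measurable]: "b \<in> borel_measurable lborel" and u: "u \<in> sobolev s"
  shows "B_norm2 b (\<lambda>x. t * u x) = t\<^sup>2 * B_norm2 b u"
proof -
  note [measurable] = sobolevD(4)[OF u] sobolevD(4)[OF sobolev_scale[OF u]]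
  have "B_norm2 b (\<lambda>x. t * u x) = (LINT \<xi>|lborel. t\<^sup>2 * ((cmod (fourier_L2 u \<xi>))\<^sup>2 / b \<xi>))"
    unfolding B_norm2_def
    by (rule integral_cong_AE) (use fourier_L2_scale_AE[OF sobolevD(1,2)[OF u], of t] in
        \<open>measurable, eventually_elim, simp add: norm_mult power_mult_distrib\<close>)
  then show ?thesis
    unfolding B_norm2_def by (simp only: integral_mult_right_zero)
qed

lemma Ic_scale:
  assumes "l \<in> borel_measurable lborel" "b \<in> borel_measurable lborel" and "u \<in> sobolev s"
  shows "Ic l b c (\<lambda>x. t * u x) = t\<^sup>2 * Ic l b c u"
  unfolding Ic_def LB_norm2_scale[OF assms] B_norm2_scale[OF assms(2,3)] by (simp add: algebra_simps)

lemma Mf_scale_snd: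
  assumes [measurable]: "b \<in> borel_measurable lborel" and u: "u \<in> sobolev s"
  shows "Mf b (u, \<lambda>x. t * u x) = t * B_norm2 b u"
proof -
  note [measurable] = sobolevD(4)[OF u] sobolevD(4)[OF sobolev_scale[OF u]]
  have "Mf b (u, \<lambda>x. t * u x) = (LINT \<xi>|lborel. t * ((cmod (fourier_L2 u \<xi>))\<^sup>2 / b \<xi>))"
    unfolding Mf_def fst_conv snd_conv
  proof (rule integral_cong_AE)
    show "AE \<xi> in lborel. Re (fourier_L2 u \<xi> * cnj (fourier_L2 (\<lambda>x. t * u x) \<xi>)) / b \<xi> =
        t * ((cmod (fourier_L2 u \<xi>))\<^sup>2 / b \<xi>)"
      using fourier_L2_scale_AE[OF sobolevD(1,2)[OF u], of t]
    proof eventually_elim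
      case (elim \<xi>)
      have "Re (fourier_L2 u \<xi> * cnj (of_real t * fourier_L2 u \<xi>)) = t * (cmod (fourier_L2 u \<xi>))\<^sup>2"
        unfolding cmod_power2 by (simp add: power2_eq_square algebra_simps)
      then show ?case
        using elim by simp
    qed
  qed measurable
  then show ?thesis
    unfolding B_norm2_def by (simp only: integral_mult_right_zero)
qed

lemma Ef_Mf_traveling_wave:
  assumes "b \<in> borel_measurable lborel" and "u \<in> sobolev s"
  shows "Ef l b p (u, \<lambda>x. - c * u x) + c * Mf b (u, \<lambda>x. - c * u x) = Ic l b c u - Qf p u / (p + 1)"
  unfolding Ef_def Ic_def fst_conv snd_conv B_norm2_scale[OF assms] Mf_scale_snd[OF assms]
  by (simp add: power2_eq_square algebra_simps)

lemma abs_Re_mult_cnj_le: "\<bar>Re (X * cnj Y)\<bar> \<le> (cmod X)\<^sup>2 + (cmod Y)\<^sup>2"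
proof -
  have "\<bar>Re (X * cnj Y)\<bar> \<le> cmod X * cmod Y"
    using abs_Re_le_cmod[of "X * cnj Y"] by (simp add: norm_mult)
  also have "\<dots> \<le> (cmod X)\<^sup>2 + (cmod Y)\<^sup>2"
  proof -
    have "2 * (cmod X * cmod Y) \<le> (cmod X)\<^sup>2 + (cmod Y)\<^sup>2"
      using zero_le_power2[of "cmod X - cmod Y"] by (simp add: power2_eq_square algebra_simps)
    moreover have "0 \<le> cmod X * cmod Y"
      by simp
    ultimately show ?thesis
      by linarith
  qed
  finally show ?thesis .
qed

lemma cmod_add_of_real_mult_power2:
  "(cmod (W + of_real c * U))\<^sup>2 = (cmod W)\<^sup>2 + 2 * c * Re (U * cnj W) + c\<^sup>2 * (cmod U)\<^sup>2"
  unfolding cmod_power2 by (simp add: power2_eq_square algebra_simps)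

section \<open>Subsonic symbols\<close>

locale subsonic_symbols =
  fixes l b :: "real \<Rightarrow> real" and r \<rho> c :: real
  assumes l_measurable [measurable]: "l \<in> borel_measurable lborel"
    and b_measurable [measurable]: "b \<in> borel_measurable lborel"
    and b_pos: "\<And>\<xi>. 0 < b \<xi>"
    and c_le_l: "\<And>\<xi>. c\<^sup>2 \<le> l \<xi>"
    and l_div_b_bound: "\<exists>C. \<forall>\<xi>. l \<xi> / b \<xi> \<le> C * (1 + \<xi>\<^sup>2) powr ((r + \<rho>) / 2)"
    and inverse_b_bound: "\<exists>C. \<forall>\<xi>. 1 / b \<xi> \<le> C * (1 + \<xi>\<^sup>2) powr (r / 2)"
    and rho_nonneg: "0 \<le> \<rho>"
begin

lemma integrable_LB_integrand:
  assumes u: "u \<in> sobolev ((r + \<rho>) / 2)"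
  shows "integrable lborel (\<lambda>\<xi>. l \<xi> / b \<xi> * (cmod (fourier_L2 u \<xi>))\<^sup>2)"
proof -
  obtain C where C: "\<And>\<xi>. l \<xi> / b \<xi> \<le> C * (1 + \<xi>\<^sup>2) powr ((r + \<rho>) / 2)"
    using l_div_b_bound by blast
  have "0 \<le> l \<xi> / b \<xi>" for \<xi>
    using c_le_l[of \<xi>] b_pos[of \<xi>] by (simp add: order_trans[OF zero_le_power2])
  then have "\<bar>l \<xi> / b \<xi>\<bar> \<le> C * (1 + \<xi>\<^sup>2) powr ((r + \<rho>) / 2)" for \<xi>
    using C[of \<xi>] by (metis abs_of_nonneg)
  then show ?thesis
    by (intro integrable_weighted_fourier_L2[OF u]) auto
qed

lemma integrable_B_integrand:
  assumes u: "u \<in> sobolev s" and s: "r / 2 \<le> s"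
  shows "integrable lborel (\<lambda>\<xi>. (cmod (fourier_L2 u \<xi>))\<^sup>2 / b \<xi>)"
proof -
  obtain C where C: "\<And>\<xi>. 1 / b \<xi> \<le> C * (1 + \<xi>\<^sup>2) powr (r / 2)"
    using inverse_b_bound by blast
  have "\<bar>1 / b \<xi>\<bar> \<le> \<bar>C\<bar> * (1 + \<xi>\<^sup>2) powr s" for \<xi>
  proof -
    have "\<bar>1 / b \<xi>\<bar> \<le> \<bar>C\<bar> * (1 + \<xi>\<^sup>2) powr (r / 2)"
      using C[of \<xi>] b_pos[of \<xi>] by (smt (verit) divide_pos_pos mult_right_mono powr_ge_zero)
    also have "\<dots> \<le> \<bar>C\<bar> * (1 + \<xi>\<^sup>2) powr s"
      using s by (intro mult_left_mono powr_mono) auto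
    finally show ?thesis .
  qed
  then have "integrable lborel (\<lambda>\<xi>. 1 / b \<xi> * (cmod (fourier_L2 u \<xi>))\<^sup>2)"
    by (intro integrable_weighted_fourier_L2[OF u]) auto
  then show ?thesis
    by simp
qed

lemma Ic_nonneg:
  assumes u: "u \<in> sobolev ((r + \<rho>) / 2)"
  shows "0 \<le> Ic l b c u"
proof -
  have "c\<^sup>2 * B_norm2 b u = (LINT \<xi>|lborel. c\<^sup>2 * ((cmod (fourier_L2 u \<xi>))\<^sup>2 / b \<xi>))"
    unfolding B_norm2_def by (rule integral_mult_right_zero[symmetric])
  also have "\<dots> \<le> LB_norm2 l b u"
    unfolding LB_norm2_def
  proof (rule integral_mono)
    show "integrable lborel (\<lambda>\<xi>. c\<^sup>2 * ((cmod (fourier_L2 u \<xi>))\<^sup>2 / b \<xi>))"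
      using rho_nonneg by (intro integrable_mult_right integrable_B_integrand[OF u]) simp
    show "c\<^sup>2 * ((cmod (fourier_L2 u \<xi>))\<^sup>2 / b \<xi>) \<le> l \<xi> / b \<xi> * (cmod (fourier_L2 u \<xi>))\<^sup>2" for \<xi>
    proof -
      have "c\<^sup>2 / b \<xi> \<le> l \<xi> / b \<xi>"
        using c_le_l[of \<xi>] b_pos[of \<xi>] by (simp add: divide_right_mono)
      then show ?thesis
        by (metis mult_right_mono zero_le_power2 times_divide_eq_right mult.commute)
    qed
  qed (rule integrable_LB_integrand[OF u])
  finally show ?thesis
    unfolding Ic_def by simp
qed

lemma m1_le_Ic:
  assumes "\<psi> \<in> sobolev ((r + \<rho>) / 2)" "Qf p \<psi> = 1"
  shows "m1 l b r \<rho> p c \<le> Ic l b c \<psi>"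
  unfolding m1_def using assms Ic_nonneg by (intro cInf_lower bdd_belowI[of _ 0]) auto

lemma power2_mult_m1_le_Ic:
  assumes u: "u \<in> sobolev ((r + \<rho>) / 2)" and K: "0 \<le> K" and Q: "Qf p u = K powr (p + 1)"
  shows "K\<^sup>2 * m1 l b r \<rho> p c \<le> Ic l b c u"
proof (cases "K = 0")
  case True
  then show ?thesis
    using Ic_nonneg[OF u] by simp
next
  case False
  with K have K: "0 < K"
    by simp
  have "Qf p (\<lambda>x. (1 / K) * u x) = \<bar>1 / K\<bar> powr (p + 1) * K powr (p + 1)"
    unfolding Qf_scale Q ..
  also have "\<dots> = 1"
    using K by (simp add: powr_mult[symmetric])
  finally have "m1 l b r \<rho> p c \<le> Ic l b c (\<lambda>x. (1 / K) * u x)"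
    by (intro m1_le_Ic sobolev_scale u)
  also have "\<dots> = (1 / K)\<^sup>2 * Ic l b c u"
    by (rule Ic_scale[OF l_measurable b_measurable u])
  finally show ?thesis
    using K by (simp add: field_simps)
qed

lemma integrable_cross_integrand:
  assumes u: "u \<in> sobolev ((r + \<rho>) / 2)" and w: "w \<in> sobolev (r / 2)"
  shows "integrable lborel (\<lambda>\<xi>. Re (fourier_L2 u \<xi> * cnj (fourier_L2 w \<xi>)) / b \<xi>)"
proof (rule Bochner_Integration.integrable_bound)
  show "integrable lborel (\<lambda>\<xi>. (cmod (fourier_L2 u \<xi>))\<^sup>2 / b \<xi> + (cmod (fourier_L2 w \<xi>))\<^sup>2 / b \<xi>)"
    using rho_nonneg
    by (intro Bochner_Integration.integrable_add integrable_B_integrand[OF u] integrable_B_integrand[OF w]) auto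
  show "AE \<xi> in lborel. norm (Re (fourier_L2 u \<xi> * cnj (fourier_L2 w \<xi>)) / b \<xi>) \<le>
      norm ((cmod (fourier_L2 u \<xi>))\<^sup>2 / b \<xi> + (cmod (fourier_L2 w \<xi>))\<^sup>2 / b \<xi>)"
    using b_pos abs_Re_mult_cnj_le
    by (intro AE_I2) (simp add: add_divide_distrib[symmetric] abs_divide divide_right_mono)
qed (use sobolevD(4)[OF u] sobolevD(4)[OF w] in measurable)

lemma Ic_minus_Qf_le_Ef_Mf:
  assumes u: "u \<in> sobolev ((r + \<rho>) / 2)" and w: "w \<in> sobolev (r / 2)"
  shows "Ic l b c u - Qf p u / (p + 1) \<le> Ef l b p (u, w) + c * Mf b (u, w)"
proof -
  define U where "U = fourier_L2 u"
  define W where "W = fourier_L2 w"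
  have iU: "integrable lborel (\<lambda>\<xi>. (cmod (U \<xi>))\<^sup>2 / b \<xi>)"
    unfolding U_def using rho_nonneg by (intro integrable_B_integrand[OF u]) simp
  have iW: "integrable lborel (\<lambda>\<xi>. (cmod (W \<xi>))\<^sup>2 / b \<xi>)"
    unfolding W_def by (intro integrable_B_integrand[OF w]) simp
  have iUW: "integrable lborel (\<lambda>\<xi>. Re (U \<xi> * cnj (W \<xi>)) / b \<xi>)"
    unfolding U_def W_def by (rule integrable_cross_integrand[OF u w])
  have "0 \<le> (LINT \<xi>|lborel. (cmod (W \<xi> + c * U \<xi>))\<^sup>2 / (2 * b \<xi>))"
    using b_pos by (intro integral_nonneg_AE AE_I2) (simp add: less_imp_le)
  also have "\<dots> = (LINT \<xi>|lborel. 1 / 2 * ((cmod (W \<xi>))\<^sup>2 / b \<xi>) + c * (Re (U \<xi> * cnj (W \<xi>)) / b \<xi>)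
      + c\<^sup>2 / 2 * ((cmod (U \<xi>))\<^sup>2 / b \<xi>))"
  proof (intro Bochner_Integration.integral_cong refl)
    fix \<xi>
    show "(cmod (W \<xi> + c * U \<xi>))\<^sup>2 / (2 * b \<xi>) = 1 / 2 * ((cmod (W \<xi>))\<^sup>2 / b \<xi>)
        + c * (Re (U \<xi> * cnj (W \<xi>)) / b \<xi>) + c\<^sup>2 / 2 * ((cmod (U \<xi>))\<^sup>2 / b \<xi>)"
      using b_pos[of \<xi>] unfolding cmod_add_of_real_mult_power2 by (simp add: field_simps)
  qed
  also have "\<dots> = B_norm2 b w / 2 + c * Mf b (u, w) + c\<^sup>2 / 2 * B_norm2 b u"
  proof -
    have i1: "integrable lborel (\<lambda>\<xi>. 1 / 2 * ((cmod (W \<xi>))\<^sup>2 / b \<xi>))"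
      using iW by (rule integrable_mult_right)
    have i2: "integrable lborel (\<lambda>\<xi>. c * (Re (U \<xi> * cnj (W \<xi>)) / b \<xi>))"
      using iUW by (rule integrable_mult_right)
    have i3: "integrable lborel (\<lambda>\<xi>. c\<^sup>2 / 2 * ((cmod (U \<xi>))\<^sup>2 / b \<xi>))"
      using iU by (rule integrable_mult_right)
    show ?thesis
      unfolding Bochner_Integration.integral_add[OF Bochner_Integration.integrable_add[OF i1 i2] i3]
        Bochner_Integration.integral_add[OF i1 i2] integral_mult_right_zero
      by (simp add: B_norm2_def Mf_def U_def W_def)
  qed
  finally show ?thesis
    unfolding Ef_def Ic_def by simp
qed

lemma traveling_wave_minimizes:
  assumes \<phi>: "\<phi> \<in> sobolev ((r + \<rho>) / 2)" and K: "0 \<le> K"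
    and I\<phi>: "Ic l b c \<phi> = K\<^sup>2 * m1 l b r \<rho> p c" and Q\<phi>: "Qf p \<phi> = K powr (p + 1)"
    and U: "U \<in> Xspace r \<rho>" and QU: "Qf p (fst U) = K powr (p + 1)"
  shows "Ef l b p (\<phi>, \<lambda>x. - c * \<phi> x) + c * Mf b (\<phi>, \<lambda>x. - c * \<phi> x) \<le> Ef l b p U + c * Mf b U"
proof -
  have "(r + \<rho>) / 2 - \<rho> / 2 = r / 2"
    by (simp add: field_simps)
  then have u: "fst U \<in> sobolev ((r + \<rho>) / 2)" and w: "snd U \<in> sobolev (r / 2)"
    using U unfolding Xspace_def by (simp_all only: mem_Times_iff)
  have "Ef l b p (\<phi>, \<lambda>x. - c * \<phi> x) + c * Mf b (\<phi>, \<lambda>x. - c * \<phi> x) = Ic l b c \<phi> - Qf p \<phi> / (p + 1)"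
    by (rule Ef_Mf_traveling_wave[OF b_measurable \<phi>])
  also have "\<dots> \<le> Ic l b c (fst U) - Qf p (fst U) / (p + 1)"
    unfolding I\<phi> Q\<phi> QU using power2_mult_m1_le_Ic[OF u K QU] by simp
  also have "\<dots> \<le> Ef l b p U + c * Mf b U"
    using Ic_minus_Qf_le_Ef_Mf[OF u w] by simp
  finally show ?thesis .
qed

lemma Gc_memberD:
  assumes "\<phi> \<in> Gc l b r \<rho> p c"
  defines "K \<equiv> (2 * m1 l b r \<rho> p c) powr (1 / (p - 1))"
  shows "\<phi> \<in> sobolev ((r + \<rho>) / 2)" and "0 \<le> m1 l b r \<rho> p c"
    and "Ic l b c \<phi> = K\<^sup>2 * m1 l b r \<rho> p c" and "Qf p \<phi> = K powr (p + 1)"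
proof -
  obtain \<psi> where \<phi>: "\<phi> = (\<lambda>x. K * \<psi> x)" and \<psi>: "\<psi> \<in> sobolev ((r + \<rho>) / 2)"
    and Q\<psi>: "Qf p \<psi> = 1" and I\<psi>: "Ic l b c \<psi> = m1 l b r \<rho> p c"
    using assms unfolding Gc_def K_def by blast
  show "\<phi> \<in> sobolev ((r + \<rho>) / 2)"
    unfolding \<phi> by (rule sobolev_scale[OF \<psi>])
  show "0 \<le> m1 l b r \<rho> p c"
    using Ic_nonneg[OF \<psi>] I\<psi> by simp
  show "Ic l b c \<phi> = K\<^sup>2 * m1 l b r \<rho> p c"
    unfolding \<phi> Ic_scale[OF l_measurable b_measurable \<psi>] I\<psi> ..
  show "Qf p \<phi> = K powr (p + 1)"
    unfolding \<phi> Qf_scale Q\<psi> K_def by simp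
qed

end

lemma smooth_fun_borel_measurable:
  assumes "smooth_fun f"
  shows "f \<in> borel_measurable borel"
proof (rule borel_measurable_continuous_onI)
  have "f differentiable (at x)" for x
    using assms unfolding smooth_fun_def by (metis funpow_0 id_def)
  then show "continuous_on UNIV f"
    by (intro continuous_at_imp_continuous_on) (auto intro: differentiable_imp_continuous_within)
qed

text \<open>\<open>best_lower l \<rho>\<close> is the best constant \<open>c\<^sub>1\<^sup>2\<close>; since \<open>(1 + \<xi>\<^sup>2)\<^bsup>\<rho>/2\<^esup> \<ge> 1\<close>, every speed
  below it is dominated by the symbol \<open>l\<close> itself.\<close>
lemma power2_le_symbol_if_less_best_lower:
  fixes l :: "real \<Rightarrow> real"
  assumes rho: "0 \<le> \<rho>" and l_lower: "\<exists>A>0. \<forall>\<xi>. A * (1 + \<xi>\<^sup>2) powr (\<rho> / 2) \<le> l \<xi>"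
    and c: "c\<^sup>2 < best_lower l \<rho>"
  shows "c\<^sup>2 \<le> l \<xi>"
proof -
  obtain A where A: "0 < A" "\<And>\<xi>. A * (1 + \<xi>\<^sup>2) powr (\<rho> / 2) \<le> l \<xi>"
    using l_lower by blast
  define f where "f \<xi> = l \<xi> / (1 + \<xi>\<^sup>2) powr (\<rho> / 2)" for \<xi>
  have pos: "0 < (1 + \<xi>\<^sup>2) powr (\<rho> / 2)" for \<xi> :: real
    using add_pos_nonneg[OF zero_less_one zero_le_power2[of \<xi>]] by simp
  have "A \<le> f \<xi>" for \<xi>
    using A(2)[of \<xi>] pos[of \<xi>] by (simp add: f_def pos_le_divide_eq)
  then have "A \<le> best_lower l \<rho>" and "best_lower l \<rho> \<le> f \<xi>"
    unfolding best_lower_def f_def[symmetric]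
    by (auto intro!: cInf_greatest cInf_lower bdd_belowI[of _ A])
  have "c\<^sup>2 < best_lower l \<rho> * 1"
    using c by simp
  also have "\<dots> \<le> best_lower l \<rho> * (1 + \<xi>\<^sup>2) powr (\<rho> / 2)"
    using A(1) \<open>A \<le> best_lower l \<rho>\<close> rho by (intro mult_left_mono ge_one_powr_ge_zero) auto
  also have "\<dots> \<le> l \<xi>"
    using \<open>best_lower l \<rho> \<le> f \<xi>\<close> pos[of \<xi>] by (simp add: f_def pos_le_divide_eq)
  finally show ?thesis
    by simp
qed

lemma divide_le_powr_diff:
  fixes P :: real
  assumes "0 < P" "0 < B" "0 \<le> x" "x \<le> A * P powr \<alpha>" "B * P powr \<beta> \<le> y"
  shows "x / y \<le> A / B * P powr (\<alpha> - \<beta>)"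
proof -
  have "x / y \<le> A * P powr \<alpha> / (B * P powr \<beta>)"
    using assms by (intro frac_le) (auto intro: order_trans[OF _ assms(4)])
  also have "\<dots> = A / B * P powr (\<alpha> - \<beta>)"
    by (simp add: powr_diff)
  finally show ?thesis .
qed

lemma subsonic_symbols_if_bounds:
  fixes l b :: "real \<Rightarrow> real"
  assumes rho: "0 \<le> \<rho>" and "smooth_fun l" "smooth_fun b"
    and l_lower: "\<exists>A>0. \<forall>\<xi>. A * (1 + \<xi>\<^sup>2) powr (\<rho> / 2) \<le> l \<xi>"
    and l_upper: "\<exists>A>0. \<forall>\<xi>. l \<xi> \<le> A * (1 + \<xi>\<^sup>2) powr (\<rho> / 2)"
    and b_lower: "\<exists>A>0. \<forall>\<xi>. A * (1 + \<xi>\<^sup>2) powr (- r / 2) \<le> b \<xi>"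
    and c: "c\<^sup>2 < best_lower l \<rho>"
  shows "subsonic_symbols l b r \<rho> c"
proof
  have P: "0 < 1 + \<xi>\<^sup>2" for \<xi> :: real
    by (simp add: add_pos_nonneg)
  obtain A1 where A1: "\<And>\<xi>. l \<xi> \<le> A1 * (1 + \<xi>\<^sup>2) powr (\<rho> / 2)"
    using l_upper by blast
  obtain A2 where A2: "0 < A2" "\<And>\<xi>. A2 * (1 + \<xi>\<^sup>2) powr (- r / 2) \<le> b \<xi>"
    using b_lower by blast
  show c_le_l: "c\<^sup>2 \<le> l \<xi>" for \<xi>
    using power2_le_symbol_if_less_best_lower[OF rho l_lower c] .
  show b_pos: "0 < b \<xi>" for \<xi>
    using A2 P[of \<xi>] by (smt (verit) mult_pos_pos powr_gt_zero)
  have "l \<xi> / b \<xi> \<le> A1 / A2 * (1 + \<xi>\<^sup>2) powr (\<rho> / 2 - - r / 2)" for \<xi>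
    using c_le_l[of \<xi>] A1 A2 P by (intro divide_le_powr_diff) (auto intro: order_trans[OF zero_le_power2])
  moreover have "\<rho> / 2 - - r / 2 = (r + \<rho>) / 2"
    by simp
  ultimately show "\<exists>C. \<forall>\<xi>. l \<xi> / b \<xi> \<le> C * (1 + \<xi>\<^sup>2) powr ((r + \<rho>) / 2)"
    by metis
  have "1 / b \<xi> \<le> 1 / A2 * (1 + \<xi>\<^sup>2) powr (0 - - r / 2)" for \<xi>
    using A2 P[of \<xi>] by (intro divide_le_powr_diff) auto
  then show "\<exists>C. \<forall>\<xi>. 1 / b \<xi> \<le> C * (1 + \<xi>\<^sup>2) powr (r / 2)"
    by (intro exI[of _ "1 / A2"]) simp
qed (use rho smooth_fun_borel_measurable assms(2,3) in auto)

theorem lemma4p2: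
  fixes l b :: "real \<Rightarrow> real" and r \<rho> p c :: real
    and \<Phi> :: "(real \<Rightarrow> real) \<times> (real \<Rightarrow> real)"
  assumes rho: "\<rho> \<ge> 0" and r: "r \<ge> 0" and rr: "r + \<rho> / 2 \<ge> 1" and p: "p > 1"
    and l_smooth: "smooth_fun l" and b_smooth: "smooth_fun b"
    and l_ord: "symbol_order l \<rho>" and b_ord: "symbol_order b (- r)"
    and l_lower: "\<exists>A>0. \<forall>\<xi>. A * (1 + \<xi>\<^sup>2) powr (\<rho> / 2) \<le> l \<xi>"
    and l_upper: "\<exists>A>0. \<forall>\<xi>. l \<xi> \<le> A * (1 + \<xi>\<^sup>2) powr (\<rho> / 2)"
    and b_lower: "\<exists>A>0. \<forall>\<xi>. A * (1 + \<xi>\<^sup>2) powr (- r / 2) \<le> b \<xi>"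
    and b_upper: "\<exists>A>0. \<forall>\<xi>. b \<xi> \<le> A * (1 + \<xi>\<^sup>2) powr (- r / 2)"
    and c: "c\<^sup>2 < best_lower l \<rho>"
    and \<Phi>: "\<Phi> \<in> GGc l b r \<rho> p c"
  shows "\<Phi> \<in> Xspace r \<rho> \<and>
         Qf p (fst \<Phi>) = 2 powr ((p + 1) / (p - 1)) * (m1 l b r \<rho> p c) powr ((p + 1) / (p - 1)) \<and>
         (\<forall>U \<in> Xspace r \<rho>.
            Qf p (fst U) = 2 powr ((p + 1) / (p - 1)) * (m1 l b r \<rho> p c) powr ((p + 1) / (p - 1))
            \<longrightarrow> Ef l b p \<Phi> + c * Mf b \<Phi> \<le> Ef l b p U + c * Mf b U)"
proof -
  \<comment> \<open>The symbol orders, the upper bound on \<open>b\<close>, \<open>r + \<rho>/2 \<ge> 1\<close> and \<open>p > 1\<close> are needed for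
      the infimum \<open>m\<^sub>1(c)\<close> to be attained, not for the minimality of its minimizers.\<close>
  interpret subsonic_symbols l b r \<rho> c
    by (rule subsonic_symbols_if_bounds[OF rho l_smooth b_smooth l_lower l_upper b_lower c])
  define K where "K = (2 * m1 l b r \<rho> p c) powr (1 / (p - 1))"
  obtain \<phi> where \<Phi>_eq: "\<Phi> = (\<phi>, \<lambda>x. - c * \<phi> x)" and G: "\<phi> \<in> Gc l b r \<rho> p c"
    using \<Phi> unfolding GGc_def by blast
  note \<phi> = Gc_memberD[OF G, folded K_def]
  have Q: "K powr (p + 1) = 2 powr ((p + 1) / (p - 1)) * m1 l b r \<rho> p c powr ((p + 1) / (p - 1))"
    using \<phi>(2) by (simp add: K_def powr_powr powr_mult)
  have "\<Phi> \<in> Xspace r \<rho>"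
    using \<phi>(1) sobolev_scale[OF \<phi>(1), of "- c"] sobolev_antimono[of "(r + \<rho>) / 2 - \<rho> / 2" "(r + \<rho>) / 2"] rho
    unfolding Xspace_def \<Phi>_eq by auto
  then show ?thesis
    using traveling_wave_minimizes[OF \<phi>(1) _ \<phi>(3,4)] \<phi>(4)
    unfolding \<Phi>_eq Q[symmetric] K_def by simp
qed

end
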